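(* Assume, in the setting described in the context, the strengthened saturation assumption: there is a fixed $b_{0,\gamma}\in(0,1)$ and a number $b_{h,\gamma}<b_{0,\gamma}$ such that $$\gamma < b_{h,\gamma}\,|J(u)-J(\tilde u)|.$$ Then the practical error estimator $\eta_h^{(2)}$ satisfies $$\underline{c}_{h,\gamma}|\eta_h^{(2)}| \le |J(u)-J(\tilde u)| \le \overline{c}_{h,\gamma}|\eta_h^{(2)}| \quad\text{and}\quad \underline{c}_{\gamma}|\eta_h^{(2)}| \le |J(u)-J(\tilde u)| \le \overline{c}_{\gamma}|\eta_h^{(2)}|,$$ where $\underline{c}_{h,\gamma}:=1/(1+b_{h,\gamma})$, $\overline{c}_{h,\gamma}:=1/(1-b_{h,\gamma})$, $\underline{c}_{\gamma}:=1/(1+b_{0,\gamma})$ and $\overline{c}_{\gamma}:=1/(1-b_{0,\gamma})$.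
   Context: Let $U$ and $V$ be real Banach spaces with dual $V^*$. Let $\mathcal{A}:U\to V^*$ be a (nonlinear) operator that is three times continuously Fréchet differentiable, and let $J:U\to\mathbb{R}$ be three times continuously Fréchet differentiable. Notation: $\mathcal{A}(w)(v)$ is the value of $\mathcal{A}(w)\in V^*$ at $v\in V$. For fixed $v$, $\mathcal{A}'(w)(\varphi,v)$, $\mathcal{A}''(w)(\varphi,\psi,v)$ and $\mathcal{A}'''(w)(\varphi,\psi,\chi,v)$ denote the first, second and third Fréchet derivatives of $w\mapsto\mathcal{A}(w)(v)$ at $w$ in the directions $\varphi,\psi,\chi\in U$. Analogously, $J'(w)(\varphi)$ and $J'''(w)(\varphi,\psi,\chi)$ denote derivatives of $J$. Let $u\in U$ satisfy $\mathcal{A}(u)(v)=0$ for all $v\in V$, and let $z\in V$ satisfy $\mathcal{A}'(u)(\varphi,z)=J'(u)(\varphi)$ for all $\varphi\in U$. Let $U_h^{(2)}\subset U$ and $V_h^{(2)}\subset V$ be finite-dimensional subspaces. Let $u_h^{(2)}\in U_h^{(2)}$ satisfy $\mathcal{A}(u_h^{(2)})(v)=0$ for all $v\in V_h^{(2)}$. Let $z_h^{(2)}\in V_h^{(2)}$ satisfy $\mathcal{A}'(u_h^{(2)})(\varphi,z_h^{(2)})=J'(u_h^{(2)})(\varphi)$ for all $\varphi\in U_h^{(2)}$. Let $\tilde u\in U_h^{(2)}$ and $\tilde z\in V_h^{(2)}$ be arbitrary fixed elements. Define $\rho(\tilde u)(v):=-\mathcal{A}(\tilde u)(v)$ and $\rho^*(\tilde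 u,\tilde z)(\varphi):=J'(\tilde u)(\varphi)-\mathcal{A}'(\tilde u)(\varphi,\tilde z)$. With $e:=u-\tilde u$ and $e^*:=z-\tilde z$, define $$\mathcal{R}^{(3)}:=\frac12\int_0^1\Big[J'''(\tilde u+se)(e,e,e)-\mathcal{A}'''(\tilde u+se)(e,e,e,\tilde z+se^* )-3\mathcal{A}''(\tilde u+se)(e,e,e^* )\Big]s(s-1)\,ds.$$ Let $\mathcal{R}^{(3)(2)}$ be the same expression with $e,e^*,z$ replaced by $e^{(2)}:=u_h^{(2)}-\tilde u$, $e^{(2),*}:=z_h^{(2)}-\tilde z$, $z_h^{(2)}$. Define $\eta_h^{(2)}:=\tfrac12\rho(\tilde u)(z_h^{(2)}-\tilde z)+\tfrac12\rho^*(\tilde u,\tilde z)(u_h^{(2)}-\tilde u)$ and $$\gamma:=|J(u)-J(u_h^{(2)})|+|\mathcal{R}^{(3)}-\mathcal{R}^{(3)(2)}|+|\rho(\tilde u)(\tilde z)|+|\mathcal{R}^{(3)}|.$$ *)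

theory Defs
  imports "HOL-Analysis.Analysis"
begin

text \<open>Dual space V* is rendered as the Banach space of bounded linear functionals
  bounded linear functionals on V (type blinfun into real).  Derivatives are iterated bounded linear maps; e.g.
  A''(w)(phi,psi,v) is blinfun_apply (blinfun_apply (blinfun_apply (A2 w) phi) psi) v.\<close>

definition app3 :: "('a::real_normed_vector \<Rightarrow>\<^sub>L 'b::real_normed_vector \<Rightarrow>\<^sub>L 'c::real_normed_vector \<Rightarrow>\<^sub>L 'd::real_normed_vector) \<Rightarrow> 'a \<Rightarrow> 'b \<Rightarrow> 'c \<Rightarrow> 'd"
  where "app3 F x y w = blinfun_apply (blinfun_apply (blinfun_apply F x) y) w"

definition app2 :: "('a::real_normed_vector \<Rightarrow>\<^sub>L 'b::real_normed_vector \<Rightarrow>\<^sub>L 'c::real_normed_vector) \<Rightarrow> 'a \<Rightarrow> 'b \<Rightarrow> 'c"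
  where "app2 F x y = blinfun_apply (blinfun_apply F x) y"

text \<open>The third-order remainder R^(3) of the dual weighted residual error representation.
  J3 = J''', A2 = A'', A3 = A''', ut = tilde u, zt = tilde z, e = u - ut, es = z - zt.\<close>
definition R3 ::
  "('u::real_normed_vector \<Rightarrow> ('u \<Rightarrow>\<^sub>L 'u \<Rightarrow>\<^sub>L 'u \<Rightarrow>\<^sub>L real))
   \<Rightarrow> ('u \<Rightarrow> ('u \<Rightarrow>\<^sub>L 'u \<Rightarrow>\<^sub>L 'v::real_normed_vector \<Rightarrow>\<^sub>L real))
   \<Rightarrow> ('u \<Rightarrow> ('u \<Rightarrow>\<^sub>L 'u \<Rightarrow>\<^sub>L 'u \<Rightarrow>\<^sub>L 'v \<Rightarrow>\<^sub>L real))
   \<Rightarrow> 'u \<Rightarrow> 'v \<Rightarrow> 'u \<Rightarrow> 'v \<Rightarrow> real"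
  where "R3 J3 A2 A3 ut zt e es =
    1/2 * integral {0..1} (\<lambda>s::real.
       (app3 (J3 (ut + s *\<^sub>R e)) e e e
        - blinfun_apply (app3 (A3 (ut + s *\<^sub>R e)) e e e) (zt + s *\<^sub>R es)
        - 3 * app3 (A2 (ut + s *\<^sub>R e)) e e es) * (s * (s - 1)))"

end

theory Submission
  imports Defs
begin

text \<open>Along the segment from \<open>(ut, zt)\<close> to \<open>(uh, zh)\<close>, the remainder \<open>R3\<close> is the error of
  the trapezoidal rule applied to the Lagrangian \<open>L(w, y) = J(w) - A(w)(y)\<close>. At the Galerkin
  solution \<open>L = J(uh)\<close> and \<open>L'\<close> vanishes in discrete directions, while \<open>L'\<close> at \<open>(ut, zt)\<close>
  is \<open>2\<eta>\<close>. Hence \<open>J(u) - J(ut) - \<eta>\<close> is a sum of terms bounded by \<open>\<gamma>\<close>, and the saturation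
  assumption makes \<open>\<eta>\<close> an approximation of the error \<open>J(u) - J(ut)\<close> with relative accuracy \<open>bh\<close>.\<close>

definition lagrangian ::
  "('u \<Rightarrow> real) \<Rightarrow> ('u \<Rightarrow> ('v::real_normed_vector \<Rightarrow>\<^sub>L real)) \<Rightarrow> 'u \<Rightarrow> 'v \<Rightarrow> real"
  where "lagrangian J A w y = J w - A w y"

definition lagrangian_deriv ::
  "('u::real_normed_vector \<Rightarrow> ('u \<Rightarrow>\<^sub>L real)) \<Rightarrow> ('u \<Rightarrow> ('v::real_normed_vector \<Rightarrow>\<^sub>L real))
   \<Rightarrow> ('u \<Rightarrow> ('u \<Rightarrow>\<^sub>L 'v \<Rightarrow>\<^sub>L real)) \<Rightarrow> 'u \<Rightarrow> 'v \<Rightarrow> 'u \<Rightarrow> 'v \<Rightarrow> real"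
  where "lagrangian_deriv J1 A A1 w y e es = J1 w e - app2 (A1 w) e y - A w es"

lemma trapezoidal_rule_remainder:
  fixes f f' f'' f''' :: "real \<Rightarrow> real"
  assumes "\<And>s. s \<in> {0..1} \<Longrightarrow> (f has_real_derivative f' s) (at s within {0..1})"
    and "\<And>s. s \<in> {0..1} \<Longrightarrow> (f' has_real_derivative f'' s) (at s within {0..1})"
    and "\<And>s. s \<in> {0..1} \<Longrightarrow> (f'' has_real_derivative f''' s) (at s within {0..1})"
  shows "((\<lambda>s. f''' s * (s * (s - 1))) has_integral 2 * (f 1 - f 0) - (f' 0 + f' 1)) {0..1}"
proof -
  \<comment> \<open>an antiderivative of the integrand, found by integrating by parts twice\<close>
  define H where "H s = f'' s * (s * (s - 1)) - f' s * (2 * s - 1) + 2 * f s" for s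
  have "(H has_real_derivative f''' s * (s * (s - 1))) (at s within {0..1})" if "s \<in> {0..1}" for s
    unfolding H_def
    by (rule derivative_eq_intros assms[OF that] refl | simp add: algebra_simps)+
  then have "((\<lambda>s. f''' s * (s * (s - 1))) has_integral H 1 - H 0) {0..1}"
    by (intro fundamental_theorem_of_calculus)
      (auto simp: has_real_derivative_iff_has_vector_derivative)
  moreover have "H 1 - H 0 = 2 * (f 1 - f 0) - (f' 0 + f' 1)"
    by (simp add: H_def)
  ultimately show ?thesis
    by simp
qed

lemma has_vector_derivative_along_line:
  assumes "\<And>w. (F has_derivative blinfun_apply (F' w)) (at w)"
  shows "((\<lambda>s. F (a + s *\<^sub>R e)) has_vector_derivative F' (a + s *\<^sub>R e) e) (at s within T)"
proof -
  have "((\<lambda>s. a + s *\<^sub>R e) has_derivative (\<lambda>h. h *\<^sub>R e)) (at s within T)"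
    by (auto intro!: derivative_eq_intros)
  from has_derivative_compose[OF this assms] show ?thesis
    by (simp add: has_vector_derivative_def blinfun.scaleR_right)
qed

lemma has_vector_derivative_blinfun_apply_const:
  fixes X :: "real \<Rightarrow> 'a::real_normed_vector \<Rightarrow>\<^sub>L 'b::real_normed_vector"
  assumes "(X has_vector_derivative X') (at s within T)"
  shows "((\<lambda>s. X s y) has_vector_derivative X' y) (at s within T)"
  using blinfun.has_vector_derivative[OF assms has_vector_derivative_const[of y]] by simp

lemma R3_eq_trapezoidal_error:
  fixes A :: "'u::real_normed_vector \<Rightarrow> ('v::real_normed_vector \<Rightarrow>\<^sub>L real)"
    and A1 :: "'u \<Rightarrow> ('u \<Rightarrow>\<^sub>L 'v \<Rightarrow>\<^sub>L real)"
    and A2 :: "'u \<Rightarrow> ('u \<Rightarrow>\<^sub>L 'u \<Rightarrow>\<^sub>L 'v \<Rightarrow>\<^sub>L real)"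
    and A3 :: "'u \<Rightarrow> ('u \<Rightarrow>\<^sub>L 'u \<Rightarrow>\<^sub>L 'u \<Rightarrow>\<^sub>L 'v \<Rightarrow>\<^sub>L real)"
    and J :: "'u \<Rightarrow> real"
    and J1 :: "'u \<Rightarrow> ('u \<Rightarrow>\<^sub>L real)"
    and J2 :: "'u \<Rightarrow> ('u \<Rightarrow>\<^sub>L 'u \<Rightarrow>\<^sub>L real)"
    and J3 :: "'u \<Rightarrow> ('u \<Rightarrow>\<^sub>L 'u \<Rightarrow>\<^sub>L 'u \<Rightarrow>\<^sub>L real)"
  assumes A_deriv: "\<And>w. (A has_derivative blinfun_apply (A1 w)) (at w)"
    and A1_deriv: "\<And>w. (A1 has_derivative blinfun_apply (A2 w)) (at w)"
    and A2_deriv: "\<And>w. (A2 has_derivative blinfun_apply (A3 w)) (at w)"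
    and J_deriv: "\<And>w. (J has_derivative blinfun_apply (J1 w)) (at w)"
    and J1_deriv: "\<And>w. (J1 has_derivative blinfun_apply (J2 w)) (at w)"
    and J2_deriv: "\<And>w. (J2 has_derivative blinfun_apply (J3 w)) (at w)"
  shows "R3 J3 A2 A3 ut zt e es =
      lagrangian J A (ut + e) (zt + es) - lagrangian J A ut zt
      - 1/2 * (lagrangian_deriv J1 A A1 ut zt e es + lagrangian_deriv J1 A A1 (ut + e) (zt + es) e es)"
proof -
  define p where "p s = ut + s *\<^sub>R e" for s :: real
  define q where "q s = zt + s *\<^sub>R es" for s :: real
  define f' where "f' = (\<lambda>s. lagrangian_deriv J1 A A1 (p s) (q s) e es)"
  define f'' where "f'' = (\<lambda>s. app2 (J2 (p s)) e e - app3 (A2 (p s)) e e (q s) - 2 * app2 (A1 (p s)) e es)"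
  define f''' where "f''' = (\<lambda>s. app3 (J3 (p s)) e e e - app3 (A3 (p s)) e e e (q s) - 3 * app3 (A2 (p s)) e e es)"
  note line = has_vector_derivative_along_line[where a = ut and e = e, folded p_def]
  note apply_const = has_vector_derivative_blinfun_apply_const
  have q_deriv: "(q has_vector_derivative es) (at s within T)" for s T
    unfolding q_def by (auto intro!: derivative_eq_intros)
  have J_line: "((\<lambda>s. J (p s)) has_vector_derivative J1 (p s) e) (at s within T)"
    and J1_line: "((\<lambda>s. J1 (p s) e) has_vector_derivative J2 (p s) e e) (at s within T)"
    and J2_line: "((\<lambda>s. J2 (p s) e e) has_vector_derivative J3 (p s) e e e) (at s within T)"
    and A_line: "((\<lambda>s. A (p s)) has_vector_derivative A1 (p s) e) (at s within T)"
    and A1_line: "((\<lambda>s. A1 (p s) e) has_vector_derivative A2 (p s) e e) (at s within T)"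
    and A2_line: "((\<lambda>s. A2 (p s) e e) has_vector_derivative A3 (p s) e e e) (at s within T)" for s T
    by (intro apply_const line J_deriv J1_deriv J2_deriv A_deriv A1_deriv A2_deriv)+
  have "((\<lambda>s. lagrangian J A (p s) (q s)) has_vector_derivative f' s) (at s within T)" for s T
    using has_vector_derivative_diff[OF J_line blinfun.has_vector_derivative[OF A_line q_deriv]]
    by (simp add: lagrangian_def f'_def lagrangian_deriv_def app2_def algebra_simps)
  moreover have "(f' has_vector_derivative f'' s) (at s within T)" for s T
    using has_vector_derivative_diff[OF has_vector_derivative_diff[OF J1_line
        blinfun.has_vector_derivative[OF A1_line q_deriv]] apply_const[OF A_line, where y = es]]
    by (simp add: f'_def f''_def lagrangian_deriv_def app2_def app3_def algebra_simps)
  moreover have "(f'' has_vector_derivative f''' s) (at s within T)" for s T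
    using has_vector_derivative_diff[OF has_vector_derivative_diff[OF J2_line
        blinfun.has_vector_derivative[OF A2_line q_deriv]]
        has_vector_derivative_mult_right[OF apply_const[OF A1_line, where y = es], of 2]]
    by (simp add: f''_def f'''_def app2_def app3_def algebra_simps)
  ultimately have "((\<lambda>s. f''' s * (s * (s - 1))) has_integral
      2 * (lagrangian J A (p 1) (q 1) - lagrangian J A (p 0) (q 0)) - (f' 0 + f' 1)) {0..1}"
    by (intro trapezoidal_rule_remainder) (simp_all add: has_real_derivative_iff_has_vector_derivative)
  from integral_unique[OF this] show ?thesis
    by (simp add: R3_def f'''_def f'_def p_def q_def) (simp add: field_simps)
qed

lemma abs_bounds_of_relative_error:
  fixes E \<eta> b :: real
  assumes "\<bar>E - \<eta>\<bar> \<le> b * \<bar>E\<bar>" and "b < 1"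
  shows "1 / (1 + b) * \<bar>\<eta>\<bar> \<le> \<bar>E\<bar>" and "\<bar>E\<bar> \<le> 1 / (1 - b) * \<bar>\<eta>\<bar>"
proof -
  have upper: "\<bar>\<eta>\<bar> \<le> (1 + b) * \<bar>E\<bar>"
    using assms(1) by (simp add: distrib_right; arith)
  have lower: "(1 - b) * \<bar>E\<bar> \<le> \<bar>\<eta>\<bar>"
    using assms(1) by (simp add: left_diff_distrib; arith)
  show "1 / (1 + b) * \<bar>\<eta>\<bar> \<le> \<bar>E\<bar>"
  proof (cases "1 + b > 0")
    case True
    with upper show ?thesis
      by (simp add: pos_divide_le_eq mult.commute)
  next
    case False
    then have "1 / (1 + b) * \<bar>\<eta>\<bar> \<le> 0"
      by (simp add: divide_nonneg_nonpos)
    then show ?thesis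
      by simp
  qed
  show "\<bar>E\<bar> \<le> 1 / (1 - b) * \<bar>\<eta>\<bar>"
    using lower \<open>b < 1\<close> by (simp add: pos_le_divide_eq mult.commute)
qed

theorem mainTheorem2:
  fixes A :: "'u::banach \<Rightarrow> ('v::banach \<Rightarrow>\<^sub>L real)"
    and A1 :: "'u \<Rightarrow> ('u \<Rightarrow>\<^sub>L 'v \<Rightarrow>\<^sub>L real)"
    and A2 :: "'u \<Rightarrow> ('u \<Rightarrow>\<^sub>L 'u \<Rightarrow>\<^sub>L 'v \<Rightarrow>\<^sub>L real)"
    and A3 :: "'u \<Rightarrow> ('u \<Rightarrow>\<^sub>L 'u \<Rightarrow>\<^sub>L 'u \<Rightarrow>\<^sub>L 'v \<Rightarrow>\<^sub>L real)"
    and J :: "'u \<Rightarrow> real"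
    and J1 :: "'u \<Rightarrow> ('u \<Rightarrow>\<^sub>L real)"
    and J2 :: "'u \<Rightarrow> ('u \<Rightarrow>\<^sub>L 'u \<Rightarrow>\<^sub>L real)"
    and J3 :: "'u \<Rightarrow> ('u \<Rightarrow>\<^sub>L 'u \<Rightarrow>\<^sub>L 'u \<Rightarrow>\<^sub>L real)"
    and Uh :: "'u set" and Vh :: "'v set"
    and u ut uh :: 'u and z zt zh :: 'v
    and b0 bh :: real
  assumes A_deriv: "\<And>w. (A has_derivative blinfun_apply (A1 w)) (at w)"
    and A1_deriv: "\<And>w. (A1 has_derivative blinfun_apply (A2 w)) (at w)"
    and A2_deriv: "\<And>w. (A2 has_derivative blinfun_apply (A3 w)) (at w)"
    and A3_cont: "continuous_on UNIV A3"
    and J_deriv: "\<And>w. (J has_derivative blinfun_apply (J1 w)) (at w)"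
    and J1_deriv: "\<And>w. (J1 has_derivative blinfun_apply (J2 w)) (at w)"
    and J2_deriv: "\<And>w. (J2 has_derivative blinfun_apply (J3 w)) (at w)"
    and J3_cont: "continuous_on UNIV J3"
    and primal: "\<And>v. blinfun_apply (A u) v = 0"
    and adjoint: "\<And>\<phi>. app2 (A1 u) \<phi> z = blinfun_apply (J1 u) \<phi>"
    and Uh_sub: "subspace Uh" and Uh_fin: "\<exists>B. finite B \<and> Uh = span B"
    and Vh_sub: "subspace Vh" and Vh_fin: "\<exists>B. finite B \<and> Vh = span B"
    and uh_in: "uh \<in> Uh"
    and primal_h: "\<And>v. v \<in> Vh \<Longrightarrow> blinfun_apply (A uh) v = 0"
    and zh_in: "zh \<in> Vh"
    and adjoint_h: "\<And>\<phi>. \<phi> \<in> Uh \<Longrightarrow> app2 (A1 uh) \<phi> zh = blinfun_apply (J1 uh) \<phi>"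
    and ut_in: "ut \<in> Uh" and zt_in: "zt \<in> Vh"
    and b0: "0 < b0" "b0 < 1" and bh: "bh < b0"
    and saturation:
      "\<bar>J u - J uh\<bar>
       + \<bar>R3 J3 A2 A3 ut zt (u - ut) (z - zt) - R3 J3 A2 A3 ut zt (uh - ut) (zh - zt)\<bar>
       + \<bar>- blinfun_apply (A ut) zt\<bar>
       + \<bar>R3 J3 A2 A3 ut zt (u - ut) (z - zt)\<bar>
       < bh * \<bar>J u - J ut\<bar>"
  shows
    "let \<eta> = 1/2 * (- blinfun_apply (A ut) (zh - zt))
             + 1/2 * (blinfun_apply (J1 ut) (uh - ut) - app2 (A1 ut) (uh - ut) zt)
     in 1 / (1 + bh) * \<bar>\<eta>\<bar> \<le> \<bar>J u - J ut\<bar>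
      \<and> \<bar>J u - J ut\<bar> \<le> 1 / (1 - bh) * \<bar>\<eta>\<bar>
      \<and> 1 / (1 + b0) * \<bar>\<eta>\<bar> \<le> \<bar>J u - J ut\<bar>
      \<and> \<bar>J u - J ut\<bar> \<le> 1 / (1 - b0) * \<bar>\<eta>\<bar>"
proof -
  define \<eta> where "\<eta> = 1/2 * lagrangian_deriv J1 A A1 ut zt (uh - ut) (zh - zt)"
  have "lagrangian_deriv J1 A A1 uh zh (uh - ut) (zh - zt) = 0"
    using adjoint_h[OF subspace_diff[OF Uh_sub uh_in ut_in]]
      primal_h[OF subspace_diff[OF Vh_sub zh_in zt_in]]
    by (simp add: lagrangian_deriv_def)
  then have "R3 J3 A2 A3 ut zt (uh - ut) (zh - zt) = J uh - J ut + A ut zt - \<eta>"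
    using R3_eq_trapezoidal_error[OF A_deriv A1_deriv A2_deriv J_deriv J1_deriv J2_deriv,
        of ut zt "uh - ut" "zh - zt"] primal_h[OF zh_in]
    by (simp add: \<eta>_def lagrangian_def)
  with saturation have "\<bar>(J u - J ut) - \<eta>\<bar> < bh * \<bar>J u - J ut\<bar>"
    by linarith
  moreover from bh have "bh * \<bar>J u - J ut\<bar> \<le> b0 * \<bar>J u - J ut\<bar>"
    by (simp add: mult_right_mono)
  ultimately show ?thesis
    using abs_bounds_of_relative_error[of "J u - J ut" \<eta> bh]
      abs_bounds_of_relative_error[of "J u - J ut" \<eta> b0] bh b0
    by (simp add: Let_def \<eta>_def lagrangian_deriv_def algebra_simps)
qed

end
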